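(* Let $g:\mathbb B^3\to\mathbb B$ be the Boolean function induced by the formula $v_1\wedge v_2\wedge v_3$, i.e. $g(b_1,b_2,b_3)=T$ iff $b_1=b_2=b_3=T$. There is no instruction sequence $X\in\mathrm{IS}^{na}_{br}$ such that: no jump instruction occurs in $X$, the termination instruction $!$ occurs at most once in $X$, the basic instruction $\mathrm{out}.\mathrm{set}{:}F$ does not occur in $X$ (in any plain, positive test or negative test instruction), and $X$ computes $g$.
   Context: $\mathbb B=\{T,F\}$. A primitive instruction is one of: a plain basic instruction $a$, a positive test instruction $+a$, a negative test instruction $-a$ (for a basic instruction $a$), a forward jump instruction $\#l$ ($l\in\mathbb N$), or the termination instruction $!$. An instruction sequence is a finite nonempty sequence $X=u_1;\dots;u_k$ of primitive instructions; its length is $|X|=k$. Basic instructions have the form $f.m$ where the focus $f$ is one of $\mathrm{in}{:}i$, $\mathrm{aux}{:}i$ ($i\ge 1$) or $\mathrm{out}$, each naming a Boolean register, and the method $m$ is one of $\mathrm{set}{:}T$, $\mathrm{set}{:}F$, $\mathrm{get}$. Executing $f.\mathrm{set}{:}b$ sets register $f$ to $b$ and yields reply $b$; executing $f.\mathrm{get}$ leaves the register unchanged and yields its content as reply. Execution of $X=u_1;\dots;u_k$: a counter starts at $1$. If the counter exceeds $k$, execution deadlocks. At position $i$: if $u_i=!$, execution terminates; if $u_i=\#l$, execution deadlocks if $l=0$ and otherwise the counter becomes $i+l$; if $u_i$ is $a$, $+a$ or $-a$, the basic instruction $a$ is executed yielding reply $r$, and the counter becomes $i+1$ for $u_i=a$;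 for $u_i=+a$ it becomes $i+1$ if $r=T$ and $i+2$ if $r=F$; for $u_i=-a$ it becomes $i+1$ if $r=F$ and $i+2$ if $r=T$. $\mathrm{IS}_{br}$ is the set of instruction sequences in which every basic instruction occurring belongs to $\{f.\mathrm{get}: f=\mathrm{in}{:}i \text{ or } f=\mathrm{aux}{:}i\}\cup\{f.\mathrm{set}{:}b: f=\mathrm{aux}{:}i \text{ or } f=\mathrm{out},\ b\in\mathbb B\}$. $\mathrm{IS}^{na}_{br}\subseteq \mathrm{IS}_{br}$ is the set of those in which every basic instruction belongs to $\{\mathrm{in}{:}i.\mathrm{get}: i\ge1\}\cup\{\mathrm{out}.\mathrm{set}{:}T,\mathrm{out}.\mathrm{set}{:}F\}$. $X\in\mathrm{IS}_{br}$ computes $f:\mathbb B^n\to\mathbb B$ if for every $(b_1,\dots,b_n)\in\mathbb B^n$: when $X$ is executed with register $\mathrm{in}{:}j$ initialised to $b_j$ ($j\le n$) and all registers $\mathrm{aux}{:}i$ and $\mathrm{out}$ initialised to $F$, execution terminates (does not deadlock) without ever executing a basic instruction with focus $\mathrm{in}{:}j$ for $j>n$, and at termination register $\mathrm{out}$ contains $f(b_1,\dots,b_n)$. *)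

theory Defs
  imports Main
begin

datatype focus = In nat | Aux nat | Out

datatype meth = Set bool | Get

type_synonym basic = "focus \<times> meth"

datatype prim =
    Plain basic
  | PosT basic
  | NegT basic
  | Jump nat
  | Term

type_synonym iseq = "prim list"

type_synonym regs = "focus \<Rightarrow> bool"

fun exec_basic :: "basic \<Rightarrow> regs \<Rightarrow> regs \<times> bool" where
  "exec_basic (f, Set b) s = (s(f := b), b)"
| "exec_basic (f, Get) s = (s, s f)"

fun allowed :: "nat \<Rightarrow> basic \<Rightarrow> bool" where
  "allowed n (In j, m) = (j \<le> n)"
| "allowed n (_, m) = True"

text \<open>runs n X pc s s': execution of X started at (1-based) counter pc in
  register state s terminates (reaches a ! instruction) in state s', without
  deadlock and without executing a basic instruction with focus in:j, j > n.
  Execution is deterministic, so this characterises the unique run.\<close>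
inductive runs :: "nat \<Rightarrow> iseq \<Rightarrow> nat \<Rightarrow> regs \<Rightarrow> regs \<Rightarrow> bool"
  for n :: nat and X :: iseq where
  run_term: "\<lbrakk>1 \<le> pc; pc \<le> length X; X ! (pc - 1) = Term\<rbrakk> \<Longrightarrow> runs n X pc s s"
| run_jump: "\<lbrakk>1 \<le> pc; pc \<le> length X; X ! (pc - 1) = Jump l; l > 0;
              runs n X (pc + l) s s'\<rbrakk> \<Longrightarrow> runs n X pc s s'"
| run_plain: "\<lbrakk>1 \<le> pc; pc \<le> length X; X ! (pc - 1) = Plain a; allowed n a;
              exec_basic a s = (t, r); runs n X (pc + 1) t s'\<rbrakk> \<Longrightarrow> runs n X pc s s'"
| run_pos: "\<lbrakk>1 \<le> pc; pc \<le> length X; X ! (pc - 1) = PosT a; allowed n a;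
              exec_basic a s = (t, r); runs n X (if r then pc + 1 else pc + 2) t s'\<rbrakk>
              \<Longrightarrow> runs n X pc s s'"
| run_neg: "\<lbrakk>1 \<le> pc; pc \<le> length X; X ! (pc - 1) = NegT a; allowed n a;
              exec_basic a s = (t, r); runs n X (if r then pc + 2 else pc + 1) t s'\<rbrakk>
              \<Longrightarrow> runs n X pc s s'"

fun basics_of :: "prim \<Rightarrow> basic set" where
  "basics_of (Plain a) = {a}"
| "basics_of (PosT a) = {a}"
| "basics_of (NegT a) = {a}"
| "basics_of (Jump l) = {}"
| "basics_of Term = {}"

definition basics :: "iseq \<Rightarrow> basic set" where
  "basics X = (\<Union>u\<in>set X. basics_of u)"

definition IS_br :: "iseq set" where
  "IS_br = {X. X \<noteq> [] \<and> basics X \<subseteq>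
      {(f, Get) | f i. i \<ge> 1 \<and> (f = In i \<or> f = Aux i)}
      \<union> {(f, Set b) | f i b. (i \<ge> 1 \<and> f = Aux i) \<or> f = Out}}"

definition IS_na_br :: "iseq set" where
  "IS_na_br = {X. X \<in> IS_br \<and> basics X \<subseteq>
      {(In i, Get) | i. i \<ge> 1} \<union> {(Out, Set True), (Out, Set False)}}"

text \<open>Initial register state for input (b_1,...,b_n), given as a list of length n.
  Registers in:j with j > n are never accessed in a successful run, so their
  value is irrelevant; we set them to F.\<close>
definition init_regs :: "bool list \<Rightarrow> regs" where
  "init_regs bs = (\<lambda>f. case f of In j \<Rightarrow> (1 \<le> j \<and> j \<le> length bs \<and> bs ! (j - 1)) | _ \<Rightarrow> False)"

definition computes :: "nat \<Rightarrow> iseq \<Rightarrow> (bool list \<Rightarrow> bool) \<Rightarrow> bool" where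
  "computes n X f \<longleftrightarrow> X \<in> IS_br \<and>
     (\<forall>bs. length bs = n \<longrightarrow> (\<exists>s'. runs n X 1 (init_regs bs) s' \<and> s' Out = f bs))"

definition is_jump :: "prim \<Rightarrow> bool" where
  "is_jump u \<longleftrightarrow> (\<exists>l. u = Jump l)"

definition g3 :: "bool list \<Rightarrow> bool" where
  "g3 bs \<longleftrightarrow> bs ! 0 \<and> bs ! 1 \<and> bs ! 2"

end

theory Submission
  imports Defs
begin

text \<open>
  Out starts at F and can only be set to T, so a run outputs T iff it passes an
  out.set:T instruction. With at most one ! all runs end at the same position t, and without
  jumps the counter advances by one or two per step, so a run cannot skip two consecutive
  positions. On input TTT some out.set:T at a position p < t is executed; the three inputs
  with exactly one F must all avoid p. Position p is not the first one (all runs start there),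
  so all three runs pass p - 1, which is then a test of some in:i with i \<le> 3 (or a plain get).
  Among the three inputs one gives in:i the reply that continues with the next instruction,
  and that run reaches p, a contradiction.
\<close>

text \<open>It mirrors the non-terminating clauses of runs; the point of the small-step view is that
  a run can be cut at any intermediate configuration.\<close>
inductive step :: "nat \<Rightarrow> iseq \<Rightarrow> nat \<times> regs \<Rightarrow> nat \<times> regs \<Rightarrow> bool"
  for n :: nat and X :: iseq where
  step_jump: "\<lbrakk>1 \<le> pc; pc \<le> length X; X ! (pc - 1) = Jump l; l > 0\<rbrakk>
    \<Longrightarrow> step n X (pc, s) (pc + l, s)"
| step_plain: "\<lbrakk>1 \<le> pc; pc \<le> length X; X ! (pc - 1) = Plain a; allowed n a;
    exec_basic a s = (t, r)\<rbrakk> \<Longrightarrow> step n X (pc, s) (pc + 1, t)"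
| step_pos: "\<lbrakk>1 \<le> pc; pc \<le> length X; X ! (pc - 1) = PosT a; allowed n a;
    exec_basic a s = (t, r)\<rbrakk> \<Longrightarrow> step n X (pc, s) (if r then pc + 1 else pc + 2, t)"
| step_neg: "\<lbrakk>1 \<le> pc; pc \<le> length X; X ! (pc - 1) = NegT a; allowed n a;
    exec_basic a s = (t, r)\<rbrakk> \<Longrightarrow> step n X (pc, s) (if r then pc + 2 else pc + 1, t)"

lemma runs_imp_steps:
  assumes "runs n X pc s s'"
  shows "\<exists>t. (step n X)\<^sup>*\<^sup>* (pc, s) (t, s') \<and> 1 \<le> t \<and> t \<le> length X \<and> X ! (t - 1) = Term"
  using assms
proof (induction rule: runs.induct)
  case (run_term pc s)
  then show ?case by blast
qed (meson converse_rtranclp_into_rtranclp step.intros)+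

lemma step_bounds: "step n X (pc, s) c' \<Longrightarrow> 1 \<le> pc \<and> pc \<le> length X"
  by (cases rule: step.cases) auto

lemma step_advances: "step n X c c' \<Longrightarrow> fst c < fst c'"
  by (induction rule: step.induct) auto

lemma steps_advance: "(step n X)\<^sup>*\<^sup>* c c' \<Longrightarrow> fst c \<le> fst c'"
  by (induction rule: rtranclp_induct) (auto dest: step_advances)

lemma step_short:
  assumes "\<forall>u\<in>set X. \<not> is_jump u" and "step n X (pc, s) (pc', s')"
  shows "pc' = Suc pc \<or> pc' = Suc (Suc pc)"
  using assms(2)
proof (cases rule: step.cases)
  case (step_jump l)
  then have "Jump l \<in> set X" using nth_mem[of "pc - 1" X] by auto
  then show ?thesis using assms(1) by (auto simp: is_jump_def)
qed auto

lemma step_allowed: "step n X (pc, s) c' \<Longrightarrow> a \<in> basics_of (X ! (pc - 1)) \<Longrightarrow> allowed n a"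
  by (cases rule: step.cases) auto

lemma basics_of_nth: "1 \<le> pc \<Longrightarrow> pc \<le> length X \<Longrightarrow> basics_of (X ! (pc - 1)) \<subseteq> basics X"
  unfolding basics_def by force

lemma step_basic:
  assumes "\<forall>u\<in>set X. \<not> is_jump u" "step n X (pc, s) c'"
  obtains a where "basics_of (X ! (pc - 1)) = {a}" "a \<in> basics X" "allowed n a"
proof -
  have "1 \<le> pc" "pc \<le> length X" using step_bounds[OF assms(2)] by auto
  then have "X ! (pc - 1) \<in> set X" by simp
  then have no_jump: "\<not> is_jump (X ! (pc - 1))" using assms(1) by blast
  have "\<exists>a. basics_of (X ! (pc - 1)) = {a}"
    using assms(2) by (cases rule: step.cases) (use no_jump in \<open>auto simp: is_jump_def\<close>)
  then obtain a where "basics_of (X ! (pc - 1)) = {a}" ..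
  moreover have "a \<in> basics X"
    using calculation basics_of_nth[OF \<open>1 \<le> pc\<close> \<open>pc \<le> length X\<close>] by blast
  moreover have "allowed n a" using step_allowed[OF assms(2)] calculation by blast
  ultimately show thesis using that by blast
qed

lemma step_register:
  "step n X (pc, s) (pc', s') \<Longrightarrow> s' g \<noteq> s g \<Longrightarrow> (g, Set (s' g)) \<in> basics_of (X ! (pc - 1))"
  by (cases rule: step.cases) (auto elim!: exec_basic.elims split: if_splits)

lemma step_set:
  "step n X (pc, s) (pc', s') \<Longrightarrow> (g, Set b) \<in> basics_of (X ! (pc - 1)) \<Longrightarrow> s' g = b"
  by (cases rule: step.cases) auto

text \<open>The reply on which an instruction continues with the next instruction.\<close>
fun fall_reply :: "prim \<Rightarrow> bool" where
  "fall_reply (NegT a) = False"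
| "fall_reply _ = True"

lemma step_fall_through:
  assumes st: "step n X (pc, s) (pc', s')" and get: "basics_of (X ! (pc - 1)) = {(g, Get)}"
    and reply: "s g = fall_reply (X ! (pc - 1))"
  shows "pc' = Suc pc"
  using st
proof (cases rule: step.cases)
  case (step_pos a r)
  then have "r = s g" using get by auto
  then show ?thesis using step_pos reply by simp
next
  case (step_neg a r)
  then have "r = s g" using get by auto
  then show ?thesis using step_neg reply by simp
qed (use get in auto)

lemma steps_never_set:
  assumes "(g, Set b) \<notin> basics X" "(step n X)\<^sup>*\<^sup>* c c'" "snd c g \<noteq> b"
  shows "snd c' g \<noteq> b"
  using assms(2,3)
proof (induction rule: rtranclp_induct)
  case (step d d')
  obtain pc s pc' s' where d: "d = (pc, s)" "d' = (pc', s')" by fastforce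
  with step have st: "step n X (pc, s) (pc', s')" and "s g \<noteq> b" by auto
  have "s' g \<noteq> b"
  proof
    assume "s' g = b"
    then have "s' g \<noteq> s g" using \<open>s g \<noteq> b\<close> by simp
    from step_register[OF st this] have "(g, Set b) \<in> basics_of (X ! (pc - 1))"
      using \<open>s' g = b\<close> by simp
    then show False using assms(1) basics_of_nth step_bounds[OF st] by blast
  qed
  then show ?case using d by simp
qed

lemma steps_final_register:
  assumes "(g, Set (\<not> b)) \<notin> basics X" "(step n X)\<^sup>*\<^sup>* c c'" "snd c g = b"
  shows "snd c' g = b"
  using steps_never_set[OF assms(1,2)] assms(3) by auto

definition passes :: "nat \<Rightarrow> iseq \<Rightarrow> nat \<times> regs \<Rightarrow> nat \<Rightarrow> nat \<times> regs \<Rightarrow> bool" where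
  "passes n X c k c' \<longleftrightarrow> (\<exists>s. (step n X)\<^sup>*\<^sup>* c (k, s) \<and> (step n X)\<^sup>*\<^sup>* (k, s) c')"

lemma passes_start: "(step n X)\<^sup>*\<^sup>* (k, s) c' \<Longrightarrow> passes n X (k, s) k c'"
  unfolding passes_def by blast

lemma passes_prepend: "step n X c c1 \<Longrightarrow> passes n X c1 k c' \<Longrightarrow> passes n X c k c'"
  unfolding passes_def by (meson converse_rtranclp_into_rtranclp)

lemma passes_bounds:
  assumes "passes n X c k c'"
  shows "fst c \<le> k \<and> k \<le> fst c'"
proof -
  obtain s where "(step n X)\<^sup>*\<^sup>* c (k, s)" "(step n X)\<^sup>*\<^sup>* (k, s) c'"
    using assms unfolding passes_def by blast
  then show ?thesis using steps_advance[of n X c "(k, s)"] steps_advance[of n X "(k, s)" c'] by simp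
qed

lemma passes_next:
  assumes "passes n X c k c'" "k < fst c'"
  obtains s k' s' where "(step n X)\<^sup>*\<^sup>* c (k, s)" "step n X (k, s) (k', s')"
    "(step n X)\<^sup>*\<^sup>* (k', s') c'"
proof -
  obtain s where s: "(step n X)\<^sup>*\<^sup>* c (k, s)" "(step n X)\<^sup>*\<^sup>* (k, s) c'"
    using assms(1) unfolding passes_def by blast
  from s(2) show thesis
  proof (cases rule: converse_rtranclpE)
    case base
    then show thesis using assms(2) by auto
  next
    case (step d)
    obtain k' s' where "d = (k', s')" by fastforce
    with step s(1) show thesis using that by blast
  qed
qed

lemma passes_set:
  assumes "(g, Set (\<not> b)) \<notin> basics X" "passes n X c k c'" "k < fst c'"
    "(g, Set b) \<in> basics_of (X ! (k - 1))"
  shows "snd c' g = b"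
proof -
  obtain s k' s' where step: "step n X (k, s) (k', s')" and rest: "(step n X)\<^sup>*\<^sup>* (k', s') c'"
    using passes_next[OF assms(2,3)] by blast
  have "snd (k', s') g = b" using step_set[OF step assms(4)] by simp
  then show ?thesis by (rule steps_final_register[OF assms(1) rest])
qed

text \<open>Core property of jump-free sequences: since the counter moves in steps of one or two,
  an execution cannot skip both of two consecutive positions m and m + 1.\<close>
lemma passes_gap:
  assumes no_jump: "\<forall>u\<in>set X. \<not> is_jump u"
    and path: "(step n X)\<^sup>*\<^sup>* c c'" and "fst c \<le> m" "m < fst c'"
  shows "passes n X c m c' \<or> passes n X c (Suc m) c'"
  using path assms(3,4)
proof (induction rule: converse_rtranclp_induct)
  case base
  then show ?case by simp
next
  case (step d d1)
  obtain pc s pc1 s1 where d: "d = (pc, s)" and d1: "d1 = (pc1, s1)" by fastforce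
  have short: "pc1 = Suc pc \<or> pc1 = Suc (Suc pc)"
    using step_short[OF no_jump] step.hyps(1) d d1 by simp
  have from_d: "(step n X)\<^sup>*\<^sup>* d c'"
    using step.hyps by (rule converse_rtranclp_into_rtranclp)
  show ?case
  proof (cases "pc = m")
    case True
    then show ?thesis using passes_start from_d d by blast
  next
    case False
    then consider "pc1 \<le> m" | "pc1 = Suc m" using short step.prems d by fastforce
    then show ?thesis
    proof cases
      case 1
      then have "passes n X d1 m c' \<or> passes n X d1 (Suc m) c'"
        using step.IH step.prems(2) d1 by simp
      then show ?thesis using passes_prepend[OF step.hyps(1)] by blast
    next
      case 2
      then show ?thesis using passes_start step.hyps d1 passes_prepend[OF step.hyps(1)] by blast
    qed
  qed
qed

lemma steps_set_somewhere:
  assumes "(step n X)\<^sup>*\<^sup>* c c'" "snd c g \<noteq> b" "snd c' g = b"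
  shows "\<exists>k. passes n X c k c' \<and> k < fst c' \<and> (g, Set b) \<in> basics_of (X ! (k - 1))"
  using assms
proof (induction rule: converse_rtranclp_induct)
  case base
  then show ?case by simp
next
  case (step d d1)
  obtain pc s pc1 s1 where d: "d = (pc, s)" and d1: "d1 = (pc1, s1)" by fastforce
  show ?case
  proof (cases "s1 g = b")
    case True
    then have "(g, Set b) \<in> basics_of (X ! (pc - 1))"
      using step_register[of n X pc s pc1 s1 g] step.hyps(1) step.prems(1) d d1 by auto
    moreover have "passes n X d pc c'"
      using passes_start[of n X pc s c'] step.hyps d converse_rtranclp_into_rtranclp by metis
    moreover have "pc < fst c'"
      using step_advances[OF step.hyps(1)] steps_advance[OF step.hyps(2)] d d1 by simp
    ultimately show ?thesis by blast
  next
    case False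
    then obtain k where "passes n X d1 k c'" "k < fst c'" "(g, Set b) \<in> basics_of (X ! (k - 1))"
      using step.IH step.prems(2) d1 by auto
    then show ?thesis using passes_prepend[OF step.hyps(1)] by blast
  qed
qed

lemma run_sets_out:
  assumes "(step n X)\<^sup>*\<^sup>* (1, init_regs bs) (t, f)" "f Out"
  obtains p where "passes n X (1, init_regs bs) p (t, f)" "1 \<le> p" "p < t"
    "(Out, Set True) \<in> basics_of (X ! (p - 1))"
proof -
  have "snd (1, init_regs bs) Out \<noteq> True" by (simp add: init_regs_def)
  then obtain p where "passes n X (1, init_regs bs) p (t, f)" "p < t"
    "(Out, Set True) \<in> basics_of (X ! (p - 1))"
    using steps_set_somewhere[OF assms(1) \<open>snd (1, _) Out \<noteq> True\<close>] assms(2) by auto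
  moreover have "1 \<le> p" using passes_bounds[OF calculation(1)] by simp
  ultimately show thesis using that by blast
qed

lemma run_avoids_out_set:
  assumes "(Out, Set False) \<notin> basics X" "passes n X c k (t, f)" "\<not> f Out" "k < t"
  shows "(Out, Set True) \<notin> basics_of (X ! (k - 1))"
proof
  assume out_set: "(Out, Set True) \<in> basics_of (X ! (k - 1))"
  have "(Out, Set (\<not> True)) \<notin> basics X" using assms(1) by simp
  from passes_set[OF this assms(2) _ out_set] have "snd (t, f) Out = True" using assms(4) by simp
  then show False using assms(3) by simp
qed

lemma unique_term:
  assumes "length (filter (\<lambda>u. u = Term) X) \<le> 1"
    and "1 \<le> i" "i \<le> length X" "X ! (i - 1) = Term"
    and "1 \<le> j" "j \<le> length X" "X ! (j - 1) = Term"
  shows "i = j"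
proof -
  have "card {k. k < length X \<and> X ! k = Term} \<le> Suc 0"
    using assms(1) by (simp add: length_filter_conv_card)
  then have "i - 1 = j - 1"
    using assms(2-7) by (subst (asm) card_le_Suc0_iff_eq) auto
  then show ?thesis using assms(2,5) by simp
qed

text \<open>With at most one !, all runs of a sequence computing f end at the same position t, so
  they can be compared in terms of the positions they pass.\<close>
lemma computes_common_end:
  assumes "computes n X f" "length (filter (\<lambda>u. u = Term) X) \<le> 1"
  obtains t where
    "\<And>bs. length bs = n \<Longrightarrow> \<exists>s'. (step n X)\<^sup>*\<^sup>* (1, init_regs bs) (t, s') \<and> s' Out = f bs"
proof -
  have run: "\<exists>t s'. (step n X)\<^sup>*\<^sup>* (1, init_regs bs) (t, s') \<and> s' Out = f bs
      \<and> 1 \<le> t \<and> t \<le> length X \<and> X ! (t - 1) = Term" if "length bs = n" for bs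
    using assms(1) that runs_imp_steps unfolding computes_def by metis
  obtain t where t: "1 \<le> t" "t \<le> length X" "X ! (t - 1) = Term"
    using run[of "replicate n False"] by auto
  show thesis
  proof (rule that)
    fix bs :: "bool list"
    assume "length bs = n"
    then obtain t' s' where "(step n X)\<^sup>*\<^sup>* (1, init_regs bs) (t', s')" "s' Out = f bs"
      "1 \<le> t'" "t' \<le> length X" "X ! (t' - 1) = Term"
      using run by blast
    moreover have "t' = t" using unique_term[OF assms(2)] t calculation(3-5) by blast
    ultimately show "\<exists>s'. (step n X)\<^sup>*\<^sup>* (1, init_regs bs) (t, s') \<and> s' Out = f bs" by blast
  qed
qed

definition one_false_inputs :: "bool list set" where
  "one_false_inputs = {[False, True, True], [True, False, True], [True, True, False]}"

lemma one_false_inputs_g3: "e \<in> one_false_inputs \<Longrightarrow> length e = 3 \<and> \<not> g3 e"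
  unfolding one_false_inputs_def g3_def by auto

lemma one_false_inputs_cover:
  assumes "1 \<le> i" "i \<le> 3"
  shows "\<exists>e\<in>one_false_inputs. e ! (i - 1) = b"
proof -
  consider "i = 1" | "i = 2" | "i = 3" using assms by linarith
  then show ?thesis unfolding one_false_inputs_def by cases (cases b; simp)+
qed

text \<open>The key step: if all runs on one_false_inputs pass a position c that holds a test of an
  input register, then one of them continues with position c + 1, since the input register
  takes the fall-through reply on one of these inputs.\<close>
lemma one_false_inputs_fall_through:
  assumes no_jump: "\<forall>u\<in>set X. \<not> is_jump u"
    and instrs: "basics X \<subseteq> {(In i, Get) | i. 1 \<le> i} \<union> {(Out, Set True)}"
    and pass_c: "\<And>e. e \<in> one_false_inputs \<Longrightarrow> passes 3 X (1, init_regs e) c (t, fin e)"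
    and "c < t" and no_out: "(Out, Set True) \<notin> basics_of (X ! (c - 1))"
  shows "\<exists>e\<in>one_false_inputs. passes 3 X (1, init_regs e) (Suc c) (t, fin e)"
proof -
  have c_before: "c < fst (t, f)" for f :: regs using \<open>c < t\<close> by simp
  have "passes 3 X (1, init_regs [False, True, True]) c (t, fin [False, True, True])"
    using pass_c unfolding one_false_inputs_def by blast
  then obtain s0 c0 s0' where "step 3 X (c, s0) (c0, s0')"
    using passes_next[OF _ c_before] by blast
  then obtain a where a: "basics_of (X ! (c - 1)) = {a}" "a \<in> basics X" "allowed 3 a"
    by (rule step_basic[OF no_jump])
  then obtain i where a_get: "a = (In i, Get)" "1 \<le> i" "i \<le> 3"
    using instrs no_out by auto
  obtain e where "e \<in> one_false_inputs" and e_reply: "e ! (i - 1) = fall_reply (X ! (c - 1))"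
    using one_false_inputs_cover[OF a_get(2,3)] by blast
  have "passes 3 X (1, init_regs e) c (t, fin e)" using \<open>e \<in> one_false_inputs\<close> by (rule pass_c)
  then obtain s c' s' where to_c: "(step 3 X)\<^sup>*\<^sup>* (1, init_regs e) (c, s)"
    and from_c: "step 3 X (c, s) (c', s')" and rest: "(step 3 X)\<^sup>*\<^sup>* (c', s') (t, fin e)"
    using passes_next[OF _ c_before] by blast
  have "snd (c, s) (In i) = snd (1, init_regs e) (In i)"
    using steps_final_register[OF _ to_c] instrs by auto
  then have "s (In i) = e ! (i - 1)"
    using one_false_inputs_g3[OF \<open>e \<in> one_false_inputs\<close>] a_get(2,3)
    by (simp add: init_regs_def)
  then have "c' = Suc c"
    using step_fall_through[OF from_c] a(1) a_get(1) e_reply by simp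
  then have "passes 3 X (1, init_regs e) (Suc c) (t, fin e)"
    using to_c from_c rest unfolding passes_def by (meson rtranclp.rtrancl_into_rtrancl)
  then show ?thesis using \<open>e \<in> one_false_inputs\<close> by blast
qed

lemma and3_not_computed:
  assumes no_jump: "\<forall>u\<in>set X. \<not> is_jump u"
    and instrs: "basics X \<subseteq> {(In i, Get) | i. 1 \<le> i} \<union> {(Out, Set True)}"
    and ends: "\<And>bs. length bs = 3 \<Longrightarrow>
                 \<exists>s'. (step 3 X)\<^sup>*\<^sup>* (1, init_regs bs) (t, s') \<and> s' Out = g3 bs"
  shows False
proof -
  have no_reset: "(Out, Set False) \<notin> basics X" using instrs by auto
  have "\<exists>f. (step 3 X)\<^sup>*\<^sup>* (1, init_regs e) (t, f) \<and> \<not> f Out"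
    if "e \<in> one_false_inputs" for e
    using ends one_false_inputs_g3[OF that] by blast
  then obtain fin where fin_run: "\<And>e. e \<in> one_false_inputs \<Longrightarrow> (step 3 X)\<^sup>*\<^sup>* (1, init_regs e) (t, fin e)"
    and fin_out: "\<And>e. e \<in> one_false_inputs \<Longrightarrow> \<not> fin e Out"
    by metis
  have E_avoid: "(Out, Set True) \<notin> basics_of (X ! (k - 1))"
    if "e \<in> one_false_inputs" "passes 3 X (1, init_regs e) k (t, fin e)" "k < t" for e k
    using run_avoids_out_set[OF no_reset that(2) fin_out[OF that(1)] that(3)] .
  have e0: "[False, True, True] \<in> one_false_inputs" by (simp add: one_false_inputs_def)
  obtain f1 where "(step 3 X)\<^sup>*\<^sup>* (1, init_regs [True, True, True]) (t, f1)" "f1 Out"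
    using ends[of "[True, True, True]"] by (auto simp: g3_def)
  then obtain p where "1 \<le> p" "p < t" and p_out: "(Out, Set True) \<in> basics_of (X ! (p - 1))"
    by (rule run_sets_out)
  have "p \<noteq> 1" using E_avoid[OF e0 passes_start[OF fin_run[OF e0]]] p_out \<open>p < t\<close> by auto
  then obtain c where p_eq: "p = Suc c" and "1 \<le> c" using \<open>1 \<le> p\<close> by (cases p) auto
  have E_pass_c: "passes 3 X (1, init_regs e) c (t, fin e)" if "e \<in> one_false_inputs" for e
    using passes_gap[OF no_jump fin_run[OF that], of c] E_avoid[OF that, of p] p_out p_eq
      \<open>1 \<le> c\<close> \<open>p < t\<close> by auto
  have "(Out, Set True) \<notin> basics_of (X ! (c - 1))"
    using E_avoid[OF e0 E_pass_c[OF e0]] \<open>p < t\<close> p_eq by simp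
  then obtain e where "e \<in> one_false_inputs" "passes 3 X (1, init_regs e) p (t, fin e)"
    using one_false_inputs_fall_through[OF no_jump instrs E_pass_c] p_eq \<open>p < t\<close> by auto
  then show False using E_avoid p_out \<open>p < t\<close> by blast
qed

theorem theorem3:
  shows "\<not> (\<exists>X. X \<in> IS_na_br
              \<and> (\<forall>u\<in>set X. \<not> is_jump u)
              \<and> length (filter (\<lambda>u. u = Term) X) \<le> 1
              \<and> (Out, Set False) \<notin> basics X
              \<and> computes 3 X g3)"
proof
  assume "\<exists>X. X \<in> IS_na_br
              \<and> (\<forall>u\<in>set X. \<not> is_jump u)
              \<and> length (filter (\<lambda>u. u = Term) X) \<le> 1
              \<and> (Out, Set False) \<notin> basics X
              \<and> computes 3 X g3"
  then obtain X where na: "X \<in> IS_na_br" and no_jump: "\<forall>u\<in>set X. \<not> is_jump u"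
    and one_term: "length (filter (\<lambda>u. u = Term) X) \<le> 1"
    and no_reset: "(Out, Set False) \<notin> basics X" and comp: "computes 3 X g3" by blast
  have instrs: "basics X \<subseteq> {(In i, Get) | i. 1 \<le> i} \<union> {(Out, Set True)}"
    using na no_reset unfolding IS_na_br_def by blast
  obtain t where "\<And>bs. length bs = 3 \<Longrightarrow>
      \<exists>s'. (step 3 X)\<^sup>*\<^sup>* (1, init_regs bs) (t, s') \<and> s' Out = g3 bs"
    using computes_common_end[OF comp one_term] by blast
  then show False by (rule and3_not_computed[OF no_jump instrs])
qed

end
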